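(* Let $\mathcal V=\{p_1,\dots,p_M\}\subseteq\mathcal P$ ($M\ge2$) be such that for all $i\ne j$: (1) $\ell(\theta(p_i),\theta(p_j))\ge\alpha$; (2) $d_{KL}(p_i^s\|p_j^s)\le\beta$; (3) there exists an $f$-coupling $(X^s,Y^s)$ of $p_i^s$ and $p_j^s$ with $\mathbb{E}[d_h(X^s,Y^s)]\le D$. Then \[ \inf_{\hat\theta}\sup_{p\in\mathcal P}\mathbb{E}_{X^s\sim p^s}\left[\ell(\hat\theta(X^s),\theta(p))\right]\ge\max\left\{\frac{\alpha}{2}\left(1-\frac{\beta+\log 2}{\log M}\right),\ 0.4\alpha\min\left\{1,\frac{M}{e^{10\varepsilon D}}\right\}\right\}, \] where the infimum is over all $f$-restricted $(\varepsilon,0)$-differentially private estimators $\hat\theta$.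
   Context: $\mathcal X$ is a domain, $\mathcal P$ a set of distributions on $\mathcal X$ parameterized by an injective map $\theta:\mathcal P\to\Theta\subseteq\mathbb R^d$, and $\ell:\Theta\times\Theta\to\mathbb R_+$ a pseudo-metric. $p^s$ is the $s$-fold product of $p$. An estimator is a (possibly randomized) map $\hat\theta:\mathcal X^s\to\Theta$; it is $(\varepsilon,0)$-differentially private if for all $x^s,y^s$ differing in exactly one coordinate and every measurable $S$, $\Pr[\hat\theta(x^s)\in S]\le e^\varepsilon\Pr[\hat\theta(y^s)\in S]$. Fix $f:\mathcal X^s\to\mathcal Y$; $\hat\theta$ is $f$-restricted if $\hat\theta(X^s)=\hat\theta'(f(X^s))$ for some (possibly randomized) $\hat\theta'$. A pair $(X^s,Y^s)$ on a common probability space is an $f$-coupling of distributions $q_1,q_2$ on $\mathcal X^s$ if $f(X^s)$ is distributed as $f(Z_1)$, $Z_1\sim q_1$, and $f(Y^s)$ as $f(Z_2)$, $Z_2\sim q_2$. $d_h$ is Hamming distance on $\mathcal X^s$ and $d_{KL}$ the Kullback–Leibler divergence. *)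

theory Defs
  imports "HOL-Probability.Probability"
begin

definition sample_space :: "nat \<Rightarrow> 'x measure \<Rightarrow> (nat \<Rightarrow> 'x) measure" where
  "sample_space s X = PiM {..<s} (\<lambda>_. X)"

definition prod_pow :: "'x measure \<Rightarrow> nat \<Rightarrow> (nat \<Rightarrow> 'x) measure" where
  "prod_pow p s = PiM {..<s} (\<lambda>_. p)"

definition hamming :: "nat \<Rightarrow> (nat \<Rightarrow> 'x) \<Rightarrow> (nat \<Rightarrow> 'x) \<Rightarrow> nat" where
  "hamming s x y = card {i\<in>{..<s}. x i \<noteq> y i}"

text \<open>Kullback--Leibler divergence d_KL(P || Q) in nats, extended-real valued:
  +\<infinity> unless P is absolutely continuous w.r.t. Q with integrable log-density.\<close>
definition kl_div :: "'a measure \<Rightarrow> 'a measure \<Rightarrow> ereal" where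
  "kl_div P Q = (if absolutely_continuous Q P \<and> integrable P (entropy_density (exp 1) Q P)
                 then ereal (KL_divergence (exp 1) Q P) else \<infinity>)"

definition pseudometric_on :: "'t set \<Rightarrow> ('t \<Rightarrow> 't \<Rightarrow> real) \<Rightarrow> bool" where
  "pseudometric_on T l \<longleftrightarrow> (\<forall>a b. l a b \<ge> 0) \<and> (\<forall>a\<in>T. l a a = 0) \<and>
     (\<forall>a\<in>T. \<forall>b\<in>T. l a b = l b a) \<and>
     (\<forall>a\<in>T. \<forall>b\<in>T. \<forall>c\<in>T. l a c \<le> l a b + l b c)"

text \<open>A randomized estimator on samples is a Markov kernel K from the sample space into
  probability measures on Theta. (\<epsilon>,0)-differential privacy:\<close>
definition dp_kernel :: "nat \<Rightarrow> 'x measure \<Rightarrow> real \<Rightarrow> ((nat \<Rightarrow> 'x) \<Rightarrow> 't measure) \<Rightarrow> bool" where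
  "dp_kernel s X \<epsilon> K \<longleftrightarrow>
     (\<forall>x\<in>space (sample_space s X). \<forall>y\<in>space (sample_space s X). hamming s x y = 1 \<longrightarrow>
        (\<forall>S \<in> sets (K x). emeasure (K x) S \<le> ennreal (exp \<epsilon>) * emeasure (K y) S))"

text \<open>f-restricted estimators: K = K' o f for a kernel K' from Y into prob. measures on Theta
  (with its Borel sigma-algebra restricted to Theta).\<close>
definition f_restricted_dp_estimators ::
  "nat \<Rightarrow> 'x measure \<Rightarrow> ((nat \<Rightarrow> 'x) \<Rightarrow> 'y) \<Rightarrow> 'y measure \<Rightarrow> ('t::topological_space) set \<Rightarrow> real
     \<Rightarrow> ('y \<Rightarrow> 't measure) set" where
  "f_restricted_dp_estimators s X f Y \<Theta> \<epsilon> =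
     {K'. K' \<in> measurable Y (prob_algebra (restrict_space borel \<Theta>)) \<and> dp_kernel s X \<epsilon> (K' \<circ> f)}"

definition risk :: "nat \<Rightarrow> ((nat \<Rightarrow> 'x) \<Rightarrow> 'y) \<Rightarrow> ('y \<Rightarrow> 't measure) \<Rightarrow> ('t \<Rightarrow> 't \<Rightarrow> real)
     \<Rightarrow> 't \<Rightarrow> 'x measure \<Rightarrow> ennreal" where
  "risk s f K' l t p = (\<integral>\<^sup>+ x. (\<integral>\<^sup>+ u. ennreal (l u t) \<partial>(K' (f x))) \<partial>(prod_pow p s))"

text \<open>f-coupling of q1, q2 (measures on the sample space), represented by the joint law mu
  of (X^s, Y^s) on the product space, with E[d_h] \<le> D.\<close>
definition f_coupling_bound ::
  "nat \<Rightarrow> 'x measure \<Rightarrow> ((nat \<Rightarrow> 'x) \<Rightarrow> 'y) \<Rightarrow> 'y measure \<Rightarrow> (nat \<Rightarrow> 'x) measure \<Rightarrow> (nat \<Rightarrow> 'x) measure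
     \<Rightarrow> real \<Rightarrow> bool" where
  "f_coupling_bound s X f Y q1 q2 D \<longleftrightarrow>
     (\<exists>\<mu>. prob_space \<mu> \<and> sets \<mu> = sets (sample_space s X \<Otimes>\<^sub>M sample_space s X) \<and>
          distr \<mu> Y (\<lambda>z. f (fst z)) = distr q1 Y f \<and>
          distr \<mu> Y (\<lambda>z. f (snd z)) = distr q2 Y f \<and>
          (\<lambda>z. real (hamming s (fst z) (snd z))) \<in> borel_measurable \<mu> \<and>
          (\<integral>\<^sup>+ z. ennreal (real (hamming s (fst z) (snd z))) \<partial>\<mu>) \<le> ennreal D)"

end

(*
  Fix an estimator, i.e. a kernel K applied to f(X^s), and put soft indicators of the balls of
  radius alpha/2 around the packing points theta(p_k).  Because the points are alpha-separated these
  indicators have disjoint supports, so the confusion matrix a_ik (the expected indicator of ball k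
  when the data come from p_i) has row sums at most 1, and the risk at p_i is at least
  alpha/2 (1 - a_ii + sum_{k ~= i} a_ik).

  Fano part: the variational inequality KL(P || Q) >= E_P h - E_Q exp (h - 1), applied with
  h = ln M * indicator_i + 1 - ln 2, turns the bound beta on the divergence between p_i^s and p_0^s
  into ln M * a_ii - (M - 1) a_0i / 2 <= beta + ln 2 - 1/2.  If every a_ii exceeded
  (beta + ln 2) / ln M, row 0 would have sum larger than 1.

  Privacy part: group privacy bounds the ratio of the expected indicators at two samples by
  exp (eps d_h).  Integrating this along the f-coupling, after linearizing exp (- eps d_h) at the
  point 5 eps D, gives a_ji >= exp (-5c) ((1 + 5c) a_ii - c) with c = eps D.  The sum of all row
  losses is then bounded below by an affine function of the trace of a, and this forces some row
  loss to be at least 0.8 min (1, M exp (-10c)).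
*)

theory Submission
  imports Defs
begin

lemma exp_mult_le_chord:
  fixes A g :: real
  assumes "A \<ge> 0" "0 \<le> g" "g \<le> 1"
  shows "exp (A * g) \<le> 1 + (exp A - 1) * g"
  using convex_onD[OF convex_on_exp[OF \<open>A \<ge> 0\<close>], of g 0 1] assms
  by (simp add: algebra_simps)

lemma mult_ln_ge_fenchel:
  fixes r h :: real
  assumes "r \<ge> 0"
  shows "r * h - exp (h - 1) \<le> r * ln r"
proof (cases "r = 0")
  case False
  then have "r > 0" using assms by simp
  have "1 + (h - 1 - ln r) \<le> exp (h - 1 - ln r)" by (rule exp_ge_add_one_self)
  also have "\<dots> = exp (h - 1) / r" using \<open>r > 0\<close> by (simp add: exp_diff)
  finally show ?thesis using \<open>r > 0\<close> by (simp add: field_simps)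
qed simp

lemma linearized_ratio_bound:
  fixes g1 g2 b t :: real
  assumes "0 \<le> g1" "g1 \<le> 1" "0 \<le> b" and ratio: "g1 \<le> exp b * g2"
  shows "exp (-t) * ((1 + t) * g1 - b) \<le> g2"
proof -
  have "(1 + t) * g1 - b \<le> (1 + (t - b)) * g1"
    using assms(2,3) mult_left_le[of g1 b] by (simp add: algebra_simps)
  also have "\<dots> \<le> exp (t - b) * g1"
    using assms(1) by (intro mult_right_mono) auto
  finally have "exp (-t) * ((1 + t) * g1 - b) \<le> exp (-t) * (exp (t - b) * g1)"
    by (simp add: mult_left_mono)
  also have "\<dots> = exp (- b) * g1" by (simp add: mult.assoc flip: exp_add)
  also have "\<dots> \<le> exp (- b) * (exp b * g2)" using ratio by (simp add: mult_left_mono)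
  also have "\<dots> = g2" by (simp add: mult.assoc flip: exp_add)
  finally show ?thesis .
qed

lemma affine_nonneg_between:
  fixes p q a b x :: real
  assumes "a \<le> x" "x \<le> b" "0 \<le> p * a + q" "0 \<le> p * b + q"
  shows "0 \<le> p * x + q"
proof (cases "p \<ge> 0")
  case True
  then show ?thesis using assms(1,3) mult_left_mono[of a x p] by linarith
next
  case False
  then show ?thesis using assms(2,4) mult_left_mono_neg[of x b p] by linarith
qed

lemma private_fano_constant_two:
  fixes y :: real
  assumes "y \<ge> 1"
  shows "0.8 * min 1 (2 / y\<^sup>2) \<le> (1.8 - 0.8 / y) / y"
proof (cases "y\<^sup>2 \<le> 2")
  case True
  have "y \<le> 1.5"
  proof (rule ccontr)
    assume "\<not> y \<le> 1.5"
    then have "1.5 * 1.5 < y * y" by (intro mult_strict_mono) auto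
    with True show False by (simp add: power2_eq_square)
  qed
  then have "(y - 1) * (y - 1.25) \<le> (y - 1) * (1 / 4)"
    using assms by (intro mult_left_mono) auto
  moreover have "(y - 1) * (y - 1.25) = y\<^sup>2 - 2.25 * y + 1.25"
    by (simp add: power2_eq_square field_simps)
  ultimately have "0.8 * y\<^sup>2 \<le> 1.8 * y - 0.8"
    using \<open>y \<le> 1.5\<close> by simp
  then have "0.8 \<le> (1.8 - 0.8 / y) / y"
    using assms by (simp add: field_simps power2_eq_square)
  then show ?thesis by linarith
next
  case False
  have "y \<ge> 4 / 3"
  proof (rule ccontr)
    assume "\<not> y \<ge> 4 / 3"
    then have "y * y < 4 / 3 * (4 / 3)" using assms by (intro mult_strict_mono) auto
    with False show False by (simp add: power2_eq_square)
  qed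
  then have "0.8 * (2 / y\<^sup>2) \<le> (1.8 - 0.8 / y) / y"
    using assms by (simp add: field_simps power2_eq_square)
  then show ?thesis by linarith
qed

lemma private_fano_constant_ge_three:
  fixes y m :: real
  assumes "y \<ge> 1" "m \<ge> 3"
  shows "0.8 * min 1 (m / y\<^sup>2) \<le> (m - 1) / y"
proof -
  have "0.64 * m \<le> 0.64 * m + m * (m - 2.64) + 1" using assms by simp
  also have "\<dots> = (m - 1)\<^sup>2" by (simp add: power2_eq_square field_simps)
  finally have key: "0.64 * m \<le> (m - 1)\<^sup>2" .
  show ?thesis
  proof (cases "y\<^sup>2 \<le> m")
    case True
    have "(0.8 * y)\<^sup>2 = 0.64 * y\<^sup>2" by (simp add: power2_eq_square)
    also have "\<dots> \<le> 0.64 * m" using True by (intro mult_left_mono) auto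
    also have "\<dots> \<le> (m - 1)\<^sup>2" by (rule key)
    finally have "(0.8 * y)\<^sup>2 \<le> (m - 1)\<^sup>2" .
    then have "0.8 * y \<le> m - 1" by (rule power2_le_imp_le) (use assms in auto)
    then have "0.8 \<le> (m - 1) / y" using assms by (simp add: field_simps)
    then show ?thesis by linarith
  next
    case False
    have "(0.8 * m)\<^sup>2 = 0.64 * m * m" by (simp add: power2_eq_square)
    also have "\<dots> \<le> (m - 1)\<^sup>2 * y\<^sup>2"
      using key False assms by (intro mult_mono) auto
    also have "\<dots> = ((m - 1) * y)\<^sup>2" by (simp add: power_mult_distrib)
    finally have "0.8 * m \<le> (m - 1) * y"
      by (rule power2_le_imp_le) (use assms in simp)
    then have "0.8 * (m / y\<^sup>2) \<le> (m - 1) / y" using assms by (simp add: field_simps power2_eq_square)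
    then show ?thesis by linarith
  qed
qed

lemma private_fano_constant:
  fixes M :: nat and c :: real
  assumes "M \<ge> 2" "c \<ge> 0"
  shows "0.8 * min 1 (real M / exp (10 * c)) \<le> (real M - 1) * exp (- 5 * c) * (1 + 4 * c)"
proof -
  define y where "y = exp (5 * c)"
  have "y \<ge> 1" using assms(2) by (simp add: y_def)
  have exp10: "exp (10 * c) = y\<^sup>2" by (simp add: y_def power2_eq_square flip: exp_add)
  have "1 - 5 * c \<le> 1 / y" using exp_ge_add_one_self[of "- 5 * c"] by (simp add: y_def exp_minus inverse_eq_divide)
  then have linear: "1.8 - 0.8 / y \<le> 1 + 4 * c" by simp
  have rhs: "(real M - 1) * exp (- 5 * c) * (1 + 4 * c) = (real M - 1) * (1 + 4 * c) / y"
    by (simp add: y_def exp_minus field_simps)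
  show ?thesis
  proof (cases "M = 2")
    case True
    have "0.8 * min 1 (real M / exp (10 * c)) \<le> (1.8 - 0.8 / y) / y"
      using private_fano_constant_two[OF \<open>y \<ge> 1\<close>] True by (simp add: exp10)
    also have "\<dots> \<le> (1 + 4 * c) / y"
      using linear \<open>y \<ge> 1\<close> by (simp add: divide_right_mono)
    finally show ?thesis unfolding rhs using True by simp
  next
    case False
    have "0.8 * min 1 (real M / exp (10 * c)) \<le> (real M - 1) / y"
      using private_fano_constant_ge_three[OF \<open>y \<ge> 1\<close>, of "real M"] False assms(1) by (simp add: exp10)
    also have "\<dots> \<le> (real M - 1) * (1 + 4 * c) / y"
      using assms \<open>y \<ge> 1\<close> by (simp add: divide_right_mono)
    finally show ?thesis by (simp only: rhs)
  qed
qed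

section \<open>Two bounds for matrices with bounded rows\<close>

lemma fano_diagonal_bound:
  fixes a :: "nat \<Rightarrow> nat \<Rightarrow> real" and M :: nat and \<beta> :: real
  assumes "M \<ge> 2"
    and nonneg: "\<And>k. k < M \<Longrightarrow> 0 \<le> a 0 k" and row_sum: "(\<Sum>k<M. a 0 k) \<le> 1"
    and kl: "\<And>i. 0 < i \<Longrightarrow> i < M \<Longrightarrow>
               ln (real M) * a i i + 1 / 2 - ln 2 - (real M - 1) * a 0 i / 2 \<le> \<beta>"
  shows "\<exists>i<M. a i i \<le> (\<beta> + ln 2) / ln (real M)"
proof (rule ccontr)
  assume "\<not> ?thesis"
  then have large: "(\<beta> + ln 2) / ln (real M) < a i i" if "i < M" for i
    using that by auto
  have "1 / (real M - 1) < a 0 i" if "0 < i" "i < M" for i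
  proof -
    have "\<beta> + ln 2 < ln (real M) * a i i"
      using large[OF that(2)] \<open>M \<ge> 2\<close> by (simp add: field_simps)
    then have "1 < (real M - 1) * a 0 i" using kl[OF that] by simp
    then show ?thesis using \<open>M \<ge> 2\<close> by (simp add: field_simps)
  qed
  then have "(\<Sum>i\<in>{1..<M}. 1 / (real M - 1)) < (\<Sum>i\<in>{1..<M}. a 0 i)"
    using \<open>M \<ge> 2\<close> by (intro sum_strict_mono) auto
  moreover have "(\<Sum>i\<in>{1..<M}. 1 / (real M - 1)) = 1" using \<open>M \<ge> 2\<close> by (simp add: of_nat_diff)
  moreover have "{..<M} = insert 0 {1..<M}" using \<open>M \<ge> 2\<close> by auto
  ultimately show False using row_sum nonneg[of 0] \<open>M \<ge> 2\<close> by simp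
qed

lemma sum_off_diagonal_ge:
  fixes a :: "nat \<Rightarrow> nat \<Rightarrow> real" and g :: "nat \<Rightarrow> real"
  assumes "\<And>i j. i < M \<Longrightarrow> j < M \<Longrightarrow> i \<noteq> j \<Longrightarrow> g i \<le> a j i"
  shows "(real M - 1) * (\<Sum>k<M. g k) \<le> (\<Sum>i<M. \<Sum>k\<in>{..<M} - {i}. a i k)"
proof -
  have "(real M - 1) * (\<Sum>k<M. g k) = (\<Sum>i<M. \<Sum>k\<in>{..<M} - {i}. g k)"
    by (simp add: sum_diff1 sum_subtractf algebra_simps)
  also have "\<dots> \<le> (\<Sum>i<M. \<Sum>k\<in>{..<M} - {i}. a i k)"
    using assms by (intro sum_mono) auto
  finally show ?thesis .
qed

lemma private_fano_row_bound:
  fixes a :: "nat \<Rightarrow> nat \<Rightarrow> real" and M :: nat and c \<rho> :: real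
  assumes "0 < M" "c \<ge> 0" "\<rho> \<le> 0.8"
    and nonneg: "\<And>i k. i < M \<Longrightarrow> k < M \<Longrightarrow> 0 \<le> a i k"
    and diag_le: "\<And>i. i < M \<Longrightarrow> a i i \<le> 1"
    and transfer: "\<And>i j. i < M \<Longrightarrow> j < M \<Longrightarrow> i \<noteq> j \<Longrightarrow>
                     exp (- 5 * c) * ((1 + 5 * c) * a i i - c) \<le> a j i"
    and const: "\<rho> \<le> (real M - 1) * exp (- 5 * c) * (1 + 4 * c)"
  shows "\<exists>i<M. \<rho> \<le> 1 - a i i + (\<Sum>k\<in>{..<M} - {i}. a i k)"
proof (rule ccontr)
  assume contra: "\<not> ?thesis"
  define S where "S = (\<Sum>i<M. a i i)"
  define off where "off = (\<Sum>i<M. \<Sum>k\<in>{..<M} - {i}. a i k)"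
  define lam where "lam = (real M - 1) * exp (- 5 * c)"
  have "(\<Sum>i<M. 1 - a i i + (\<Sum>k\<in>{..<M} - {i}. a i k)) < (\<Sum>i<M. \<rho>)"
    using contra \<open>0 < M\<close> by (intro sum_strict_mono) auto
  then have total: "real M - S + off < real M * \<rho>"
    by (simp add: S_def off_def sum.distrib sum_subtractf)
  have "(real M - 1) * (\<Sum>k<M. exp (- 5 * c) * ((1 + 5 * c) * a k k - c)) \<le> off"
    unfolding off_def using transfer by (rule sum_off_diagonal_ge)
  then have off_ge: "lam * ((1 + 5 * c) * S - real M * c) \<le> off"
    by (simp add: lam_def S_def mult.assoc sum_distrib_left[symmetric] sum_subtractf)
  have "0 \<le> off" unfolding off_def by (intro sum_nonneg) (use nonneg in auto)
  have "0 \<le> lam" using \<open>0 < M\<close> by (simp add: lam_def)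
  txt \<open>By \<open>off_ge\<close>, the sum of all rows is at least an affine function of the trace \<open>S\<close>;
    it is at least \<open>M * \<rho>\<close> at both ends of the interval \<open>[M * (1 - \<rho>), M]\<close> that contains \<open>S\<close>.\<close>
  have "0 \<le> (lam * (1 + 5 * c) - 1) * S + real M * (1 - lam * c - \<rho>)"
  proof (rule affine_nonneg_between)
    show "real M * (1 - \<rho>) \<le> S" using total \<open>0 \<le> off\<close> by (simp add: algebra_simps)
    show "S \<le> real M" unfolding S_def using sum_mono[of "{..<M}" "\<lambda>k. a k k" "\<lambda>_. 1"] diag_le by auto
    have "(1 + 5 * c) * 0.2 \<le> (1 + 5 * c) * (1 - \<rho>)"
      using \<open>c \<ge> 0\<close> \<open>\<rho> \<le> 0.8\<close> by (intro mult_left_mono) auto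
    then have "0 \<le> lam * real M * ((1 + 5 * c) * (1 - \<rho>) - c)" using \<open>0 \<le> lam\<close> by simp
    then show "0 \<le> (lam * (1 + 5 * c) - 1) * (real M * (1 - \<rho>)) + real M * (1 - lam * c - \<rho>)"
      by (simp add: algebra_simps)
    have "0 \<le> real M * (lam * (1 + 4 * c) - \<rho>)" using const by (simp add: lam_def)
    then show "0 \<le> (lam * (1 + 5 * c) - 1) * real M + real M * (1 - lam * c - \<rho>)"
      by (simp add: algebra_simps)
  qed
  then show False using total off_ge by (simp add: algebra_simps)
qed

section \<open>Group privacy and f-couplings\<close>

lemma nn_integral_le_scaled_measure:
  assumes sets: "sets N1 = sets N2"
    and le: "\<And>A. A \<in> sets N1 \<Longrightarrow> emeasure N1 A \<le> ennreal C * emeasure N2 A"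
    and f: "f \<in> borel_measurable N2"
  shows "(\<integral>\<^sup>+x. f x \<partial>N1) \<le> ennreal C * (\<integral>\<^sup>+x. f x \<partial>N2)"
proof -
  have "emeasure N1 A \<le> emeasure (scale_measure (ennreal C) N2) A" for A
    using le by (cases "A \<in> sets N1") (simp_all add: emeasure_notin_sets)
  then have "N1 \<le> scale_measure (ennreal C) N2"
    using sets sets_eq_imp_space_eq[OF sets] by (simp add: le_measure_iff space_scale_measure le_fun_def)
  then have "(\<integral>\<^sup>+x. f x \<partial>N1) \<le> (\<integral>\<^sup>+x. f x \<partial>scale_measure (ennreal C) N2)"
    by (intro nn_integral_mono_measure) (simp_all add: sets)
  also have "\<dots> = ennreal C * (\<integral>\<^sup>+x. f x \<partial>N2)"
    by (rule nn_integral_scale_measure) (rule f)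
  finally show ?thesis .
qed

lemma ennreal_integral_le_nn_integral:
  assumes "integrable N \<phi>" "\<And>x. x \<in> space N \<Longrightarrow> 0 \<le> \<phi> x"
    and "\<And>x. x \<in> space N \<Longrightarrow> ennreal (\<phi> x) \<le> \<psi> x"
  shows "ennreal (\<integral>x. \<phi> x \<partial>N) \<le> (\<integral>\<^sup>+x. \<psi> x \<partial>N)"
proof -
  have "ennreal (\<integral>x. \<phi> x \<partial>N) = (\<integral>\<^sup>+x. ennreal (\<phi> x) \<partial>N)"
    using assms(1,2) by (intro nn_integral_eq_integral[symmetric]) (auto intro: AE_I2)
  also have "\<dots> \<le> (\<integral>\<^sup>+x. \<psi> x \<partial>N)" using assms(3) by (intro nn_integral_mono) auto
  finally show ?thesis .
qed

lemma space_sample_space: "space (sample_space s X) = PiE {..<s} (\<lambda>_. space X)"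
  by (simp add: sample_space_def space_PiM)

lemma prob_space_prod_pow: "prob_space p \<Longrightarrow> prob_space (prod_pow p s)"
  unfolding prod_pow_def by (rule prob_space_PiM) simp

lemma sets_prod_pow: "sets p = sets X \<Longrightarrow> sets (prod_pow p s) = sets (sample_space s X)"
  unfolding prod_pow_def sample_space_def by (rule sets_PiM_cong) simp_all

lemma dp_kernel_group_privacy:
  assumes dp: "dp_kernel s X \<epsilon> K"
    and sets: "\<And>z. z \<in> space (sample_space s X) \<Longrightarrow> sets (K z) = \<Sigma>"
    and "x \<in> space (sample_space s X)" "y \<in> space (sample_space s X)" "A \<in> \<Sigma>"
  shows "emeasure (K x) A \<le> ennreal (exp (\<epsilon> * real (hamming s x y))) * emeasure (K y) A"
  using assms(3-)
proof (induction "hamming s x y" arbitrary: x)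
  case 0
  then have "{i\<in>{..<s}. x i \<noteq> y i} = {}" by (simp add: hamming_def)
  then have "x = y" using 0 by (intro PiE_ext) (auto simp: space_sample_space)
  then show ?case by (simp add: hamming_def)
next
  case (Suc n)
  define E where "E = {i\<in>{..<s}. x i \<noteq> y i}"
  have "card E = Suc n" using Suc(2) by (simp add: hamming_def E_def)
  then obtain i where "i \<in> E" by fastforce
  then have i: "i < s" "x i \<noteq> y i" by (auto simp: E_def)
  define z where "z = x(i := y i)"
  have "y i \<in> space X" using Suc(4) i by (auto simp: space_sample_space PiE_iff)
  then have z: "z \<in> space (sample_space s X)"
    using Suc(3) i by (auto simp: z_def space_sample_space PiE_iff extensional_def)
  have "{k\<in>{..<s}. x k \<noteq> z k} = {i}" using i by (auto simp: z_def)
  then have "hamming s x z = 1" by (simp add: hamming_def)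
  have "{k\<in>{..<s}. z k \<noteq> y k} = E - {i}" by (auto simp: z_def E_def)
  then have "n = hamming s z y" using \<open>card E = Suc n\<close> \<open>i \<in> E\<close> by (simp add: hamming_def)
  then have IH: "emeasure (K z) A \<le> ennreal (exp (\<epsilon> * real n)) * emeasure (K y) A"
    using Suc z by simp
  have "emeasure (K x) A \<le> ennreal (exp \<epsilon>) * emeasure (K z) A"
    using dp Suc(3,5) z sets \<open>hamming s x z = 1\<close> unfolding dp_kernel_def by auto
  also have "\<dots> \<le> ennreal (exp \<epsilon>) * (ennreal (exp (\<epsilon> * real n)) * emeasure (K y) A)"
    using IH by (rule mult_left_mono) simp
  also have "\<dots> = ennreal (exp \<epsilon> * exp (\<epsilon> * real n)) * emeasure (K y) A"
    by (simp add: ennreal_mult mult.assoc)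
  also have "exp \<epsilon> * exp (\<epsilon> * real n) = exp (\<epsilon> * real (hamming s x y))"
    by (simp add: Suc(2)[symmetric] algebra_simps flip: exp_add)
  finally show ?case .
qed

lemma dp_kernel_nn_integral_le:
  assumes dp: "dp_kernel s X \<epsilon> K"
    and sets: "\<And>z. z \<in> space (sample_space s X) \<Longrightarrow> sets (K z) = sets N"
    and F: "F \<in> borel_measurable N"
    and x: "x \<in> space (sample_space s X)" and y: "y \<in> space (sample_space s X)"
  shows "(\<integral>\<^sup>+u. F u \<partial>K x) \<le> ennreal (exp (\<epsilon> * real (hamming s x y))) * (\<integral>\<^sup>+u. F u \<partial>K y)"
  using sets[OF x] sets[OF y] F dp_kernel_group_privacy[OF dp sets x y]
  by (intro nn_integral_le_scaled_measure) auto

lemma integral_comp_eq_of_distr_eq: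
  fixes G :: "'b \<Rightarrow> real"
  assumes "distr M Y g = distr N Y f" "g \<in> measurable M Y" "f \<in> measurable N Y"
    "G \<in> borel_measurable Y"
  shows "(\<integral>x. G (f x) \<partial>N) = (\<integral>z. G (g z) \<partial>M)"
  using integral_distr[OF assms(2,4)] integral_distr[OF assms(3,4)] assms(1) by simp

text \<open>The bound is \<open>max D 0\<close> because \<open>f_coupling_bound\<close> compares with \<open>ennreal D\<close>, which is \<open>0\<close>
  for negative \<open>D\<close>.\<close>

lemma f_coupling_boundE:
  assumes "f_coupling_bound s X f Y q1 q2 D" and f: "f \<in> measurable (sample_space s X) Y"
    and sets: "sets q1 = sets (sample_space s X)" "sets q2 = sets (sample_space s X)"
  obtains \<mu> where "prob_space \<mu>"
    "space \<mu> = space (sample_space s X) \<times> space (sample_space s X)"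
    "(\<lambda>z. f (fst z)) \<in> measurable \<mu> Y" "(\<lambda>z. f (snd z)) \<in> measurable \<mu> Y"
    "\<And>G :: _ \<Rightarrow> real. G \<in> borel_measurable Y \<Longrightarrow> (\<integral>x. G (f x) \<partial>q1) = (\<integral>z. G (f (fst z)) \<partial>\<mu>)"
    "\<And>G :: _ \<Rightarrow> real. G \<in> borel_measurable Y \<Longrightarrow> (\<integral>x. G (f x) \<partial>q2) = (\<integral>z. G (f (snd z)) \<partial>\<mu>)"
    "integrable \<mu> (\<lambda>z. real (hamming s (fst z) (snd z)))"
    "(\<integral>z. real (hamming s (fst z) (snd z)) \<partial>\<mu>) \<le> max D 0"
proof -
  let ?S = "sample_space s X" and ?d = "\<lambda>z. real (hamming s (fst z) (snd z))"
  obtain \<mu> where \<mu>: "prob_space \<mu>" "sets \<mu> = sets (?S \<Otimes>\<^sub>M ?S)"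
    and marginals: "distr \<mu> Y (\<lambda>z. f (fst z)) = distr q1 Y f" "distr \<mu> Y (\<lambda>z. f (snd z)) = distr q2 Y f"
    and d_meas: "?d \<in> borel_measurable \<mu>" and d_int: "(\<integral>\<^sup>+z. ennreal (?d z) \<partial>\<mu>) \<le> ennreal D"
    using assms(1) unfolding f_coupling_bound_def by blast
  have fst_meas: "(\<lambda>z. f (fst z)) \<in> measurable \<mu> Y" and snd_meas: "(\<lambda>z. f (snd z)) \<in> measurable \<mu> Y"
    using measurable_compose[OF measurable_fst f] measurable_compose[OF measurable_snd f]
    by (simp_all add: measurable_cong_sets[OF \<mu>(2) refl])
  have f1: "f \<in> measurable q1 Y" and f2: "f \<in> measurable q2 Y"
    using f by (simp_all add: measurable_cong_sets[OF sets(1) refl] measurable_cong_sets[OF sets(2) refl])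
  have "integrable \<mu> ?d"
    using d_meas d_int by (intro integrableI_nonneg) (auto intro: le_less_trans)
  moreover have "(\<integral>z. ?d z \<partial>\<mu>) \<le> max D 0"
  proof -
    have "ennreal (\<integral>z. ?d z \<partial>\<mu>) \<le> ennreal D"
      using d_int \<open>integrable \<mu> ?d\<close> by (simp add: nn_integral_eq_integral)
    then show ?thesis by (cases "D \<ge> 0") (auto simp: ennreal_le_iff2)
  qed
  ultimately show ?thesis
  proof (intro that[OF \<mu>(1) _ fst_meas snd_meas])
    show "space \<mu> = space ?S \<times> space ?S"
      using sets_eq_imp_space_eq[OF \<mu>(2)] by (simp add: space_pair_measure)
    show "(\<integral>x. G (f x) \<partial>q1) = (\<integral>z. G (f (fst z)) \<partial>\<mu>)" if "G \<in> borel_measurable Y" for G :: "_ \<Rightarrow> real"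
      using integral_comp_eq_of_distr_eq[OF marginals(1) fst_meas f1 that] .
    show "(\<integral>x. G (f x) \<partial>q2) = (\<integral>z. G (f (snd z)) \<partial>\<mu>)" if "G \<in> borel_measurable Y" for G :: "_ \<Rightarrow> real"
      using integral_comp_eq_of_distr_eq[OF marginals(2) snd_meas f2 that] .
  qed
qed

lemma f_coupling_transfer:
  fixes G :: "'y \<Rightarrow> real"
  assumes coupling: "f_coupling_bound s X f Y q1 q2 D" and f: "f \<in> measurable (sample_space s X) Y"
    and sets: "sets q1 = sets (sample_space s X)" "sets q2 = sets (sample_space s X)"
    and G: "G \<in> borel_measurable Y" "\<And>y. y \<in> space Y \<Longrightarrow> 0 \<le> G y \<and> G y \<le> 1"
    and ratio: "\<And>x z. x \<in> space (sample_space s X) \<Longrightarrow> z \<in> space (sample_space s X) \<Longrightarrow>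
                    G (f x) \<le> exp (e * real (hamming s x z)) * G (f z)"
    and "e \<ge> 0"
  shows "exp (-t) * ((1 + t) * (\<integral>x. G (f x) \<partial>q1) - e * max D 0) \<le> (\<integral>x. G (f x) \<partial>q2)"
proof -
  let ?S = "sample_space s X" and ?d = "\<lambda>z. real (hamming s (fst z) (snd z))"
  obtain \<mu> where "prob_space \<mu>" and space_\<mu>: "space \<mu> = space ?S \<times> space ?S"
    and meas: "(\<lambda>z. f (fst z)) \<in> measurable \<mu> Y" "(\<lambda>z. f (snd z)) \<in> measurable \<mu> Y"
    and marginals: "\<And>G :: _ \<Rightarrow> real. G \<in> borel_measurable Y \<Longrightarrow> (\<integral>x. G (f x) \<partial>q1) = (\<integral>z. G (f (fst z)) \<partial>\<mu>)"
      "\<And>G :: _ \<Rightarrow> real. G \<in> borel_measurable Y \<Longrightarrow> (\<integral>x. G (f x) \<partial>q2) = (\<integral>z. G (f (snd z)) \<partial>\<mu>)"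
    and d: "integrable \<mu> ?d" "(\<integral>z. ?d z \<partial>\<mu>) \<le> max D 0"
    using f_coupling_boundE[OF coupling f sets] by blast
  interpret \<mu>: prob_space \<mu> by fact
  have f_space: "f x \<in> space Y" if "x \<in> space ?S" for x using f that by (rule measurable_space)
  have int1: "integrable \<mu> (\<lambda>z. G (f (fst z)))" and int2: "integrable \<mu> (\<lambda>z. G (f (snd z)))"
    using G f_space space_\<mu> measurable_compose[OF meas(1) G(1)] measurable_compose[OF meas(2) G(1)]
    by (auto intro!: \<mu>.integrable_const_bound[where B=1])
  have "exp (-t) * ((1 + t) * (\<integral>z. G (f (fst z)) \<partial>\<mu>) - e * max D 0)
      \<le> exp (-t) * ((1 + t) * (\<integral>z. G (f (fst z)) \<partial>\<mu>) - e * (\<integral>z. ?d z \<partial>\<mu>))"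
    using d(2) \<open>e \<ge> 0\<close> by (intro mult_left_mono) (auto intro: mult_left_mono)
  also have "\<dots> = (\<integral>z. exp (-t) * ((1 + t) * G (f (fst z)) - e * ?d z) \<partial>\<mu>)"
    using int1 d(1) by simp
  also have "\<dots> \<le> (\<integral>z. G (f (snd z)) \<partial>\<mu>)"
  proof (rule integral_mono)
    fix z assume "z \<in> space \<mu>"
    then have "fst z \<in> space ?S" "snd z \<in> space ?S" by (auto simp: space_\<mu>)
    then show "exp (-t) * ((1 + t) * G (f (fst z)) - e * ?d z) \<le> G (f (snd z))"
      using G(2)[OF f_space] ratio \<open>e \<ge> 0\<close> by (intro linearized_ratio_bound) auto
  qed (use int1 int2 d(1) in auto)
  finally show ?thesis by (simp only: marginals[OF G(1)])
qed

section \<open>A variational lower bound for the Kullback-Leibler divergence\<close>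

lemma kl_div_density:
  assumes "sigma_finite_measure P" "sigma_finite_measure Q"
    and sets: "sets P = sets Q" and kl: "kl_div P Q \<le> ereal \<beta>"
  obtains r where "r \<in> borel_measurable Q" "\<And>x. 0 \<le> r x" "density Q (\<lambda>x. ennreal (r x)) = P"
    "integrable Q (\<lambda>x. r x * ln (r x))" "(\<integral>x. r x * ln (r x) \<partial>Q) \<le> \<beta>"
proof
  interpret Q: sigma_finite_measure Q by fact
  have ac: "absolutely_continuous Q P" and int: "integrable P (entropy_density (exp 1) Q P)"
    and KL: "KL_divergence (exp 1) Q P \<le> \<beta>"
    using kl unfolding kl_div_def by (auto split: if_splits)
  define r where "r x = enn2real (RN_deriv Q P x)" for x
  show r_meas: "r \<in> borel_measurable Q" unfolding r_def by measurable
  show r_nonneg: "0 \<le> r x" for x by (simp add: r_def)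
  have "AE x in Q. RN_deriv Q P x \<noteq> \<infinity>"
    by (rule Q.RN_deriv_finite[OF assms(1) ac sets])
  then have "density Q (\<lambda>x. ennreal (r x)) = density Q (RN_deriv Q P)"
    by (intro density_cong) (auto simp: r_def ennreal_enn2real_if)
  also have "\<dots> = P" by (rule Q.density_RN_deriv[OF ac sets])
  finally show density: "density Q (\<lambda>x. ennreal (r x)) = P" .
  have ln_meas: "(\<lambda>x. ln (r x)) \<in> borel_measurable Q" using r_meas by measurable
  have entropy: "entropy_density (exp 1) Q P = (\<lambda>x. ln (r x))"
    by (simp add: fun_eq_iff entropy_density_def r_def log_def)
  show "integrable Q (\<lambda>x. r x * ln (r x))"
    using int integrable_density[OF ln_meas r_meas] r_nonneg by (simp add: entropy density)
  have "KL_divergence (exp 1) Q P = (\<integral>x. ln (r x) \<partial>density Q (\<lambda>x. ennreal (r x)))"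
    by (simp add: KL_divergence_def entropy density)
  also have "\<dots> = (\<integral>x. r x * ln (r x) \<partial>Q)"
    using integral_density[OF ln_meas r_meas] r_nonneg by simp
  finally show "(\<integral>x. r x * ln (r x) \<partial>Q) \<le> \<beta>" using KL by simp
qed

lemma kl_div_variational_bound:
  fixes h :: "'a \<Rightarrow> real"
  assumes "sigma_finite_measure P" "sigma_finite_measure Q"
    and sets: "sets P = sets Q" and kl: "kl_div P Q \<le> ereal \<beta>"
    and h: "h \<in> borel_measurable Q" "integrable P h" "integrable Q (\<lambda>x. exp (h x - 1))"
  shows "(\<integral>x. h x \<partial>P) - (\<integral>x. exp (h x - 1) \<partial>Q) \<le> \<beta>"
proof -
  obtain r where r: "r \<in> borel_measurable Q" "\<And>x. 0 \<le> r x"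
    and density: "density Q (\<lambda>x. ennreal (r x)) = P"
    and r_int: "integrable Q (\<lambda>x. r x * ln (r x))" and KL: "(\<integral>x. r x * ln (r x) \<partial>Q) \<le> \<beta>"
    using kl_div_density[OF assms(1-4)] by blast
  have rh_int: "integrable Q (\<lambda>x. r x * h x)"
    using h(2) integrable_density[OF h(1) r(1)] r(2) by (simp add: density)
  have "(\<integral>x. h x \<partial>P) = (\<integral>x. r x * h x \<partial>Q)"
    using integral_density[OF h(1) r(1)] r(2) by (simp add: density)
  then have "(\<integral>x. h x \<partial>P) - (\<integral>x. exp (h x - 1) \<partial>Q) = (\<integral>x. r x * h x - exp (h x - 1) \<partial>Q)"
    using rh_int h(3) by simp
  also have "\<dots> \<le> (\<integral>x. r x * ln (r x) \<partial>Q)"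
    using rh_int h(3) r_int r(2) mult_ln_ge_fenchel by (intro integral_mono) auto
  finally show ?thesis using KL by simp
qed

lemma kl_div_test_bound:
  fixes g :: "'a \<Rightarrow> real"
  assumes P: "prob_space P" and Q: "prob_space Q"
    and sets: "sets P = sets Q" and kl: "kl_div P Q \<le> ereal \<beta>"
    and g: "g \<in> borel_measurable Q" "\<And>x. x \<in> space Q \<Longrightarrow> 0 \<le> g x \<and> g x \<le> 1"
    and "A \<ge> 0"
  shows "A * (\<integral>x. g x \<partial>P) + 1 / 2 - ln 2 - (exp A - 1) * (\<integral>x. g x \<partial>Q) / 2 \<le> \<beta>"
proof -
  interpret P: prob_space P by fact
  interpret Q: prob_space Q by fact
  define h where "h x = A * g x + 1 - ln 2" for x
  have chord: "exp (h x - 1) \<le> (1 + (exp A - 1) * g x) / 2" if "x \<in> space Q" for x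
    using exp_mult_le_chord[OF \<open>A \<ge> 0\<close>] g(2)[OF that] by (simp add: h_def exp_diff)
  have exp_le: "exp (h x - 1) \<le> exp A" if "x \<in> space Q" for x
  proof -
    have "A * g x \<le> A" using g(2)[OF that] \<open>A \<ge> 0\<close> by (simp add: mult_left_le)
    moreover have "0 < ln (2 :: real)" by simp
    ultimately have "h x - 1 \<le> A" unfolding h_def by linarith
    then show ?thesis by simp
  qed
  have exp_int: "integrable Q (\<lambda>x. exp (h x - 1))"
    using exp_le g(1) by (intro Q.integrable_const_bound[where B="exp A"] AE_I2) (auto simp: h_def)
  have g_int: "integrable Q g" "integrable P g"
    using g sets sets_eq_imp_space_eq[OF sets] measurable_cong_sets[OF sets refl]
    by (auto intro!: Q.integrable_const_bound[where B=1] P.integrable_const_bound[where B=1])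
  have "A * (\<integral>x. g x \<partial>P) + 1 - ln 2 - (1 + (exp A - 1) * (\<integral>x. g x \<partial>Q)) / 2
      \<le> (\<integral>x. h x \<partial>P) - (\<integral>x. exp (h x - 1) \<partial>Q)"
  proof -
    have "(\<integral>x. exp (h x - 1) \<partial>Q) \<le> (\<integral>x. (1 + (exp A - 1) * g x) / 2 \<partial>Q)"
      using exp_int g_int chord by (intro integral_mono) auto
    then show ?thesis using g_int by (simp add: h_def P.prob_space Q.prob_space)
  qed
  also have "\<dots> \<le> \<beta>"
    using g_int g sets kl exp_int P.sigma_finite_measure_axioms Q.sigma_finite_measure_axioms
    by (intro kl_div_variational_bound) (auto simp: h_def measurable_cong_sets[OF sets refl])
  finally show ?thesis by (simp add: field_simps)
qed

section \<open>Soft indicators of separated balls\<close>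

locale separated_points =
  fixes \<Theta> :: "'t set" and l :: "'t \<Rightarrow> 't \<Rightarrow> real" and \<alpha> :: real
    and M :: nat and th :: "nat \<Rightarrow> 't"
  assumes pseudometric: "pseudometric_on \<Theta> l"
    and \<alpha>_pos: "0 < \<alpha>"
    and th_in: "\<And>k. k < M \<Longrightarrow> th k \<in> \<Theta>"
    and separated: "\<And>i j. i < M \<Longrightarrow> j < M \<Longrightarrow> i \<noteq> j \<Longrightarrow> \<alpha> \<le> l (th i) (th j)"
begin

text \<open>With the hard indicator of the ball of radius \<open>\<alpha> / 2\<close> around \<open>th k\<close> instead,
  \<open>row_loss_soft_indicator_le\<close> would only hold with \<open>\<alpha> / 4\<close> in place of \<open>\<alpha> / 2\<close>.\<close>
definition soft_indicator :: "nat \<Rightarrow> 't \<Rightarrow> real" where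
  "soft_indicator k u = max 0 (1 - 2 * l u (th k) / \<alpha>)"

definition row_loss :: "nat \<Rightarrow> (nat \<Rightarrow> real) \<Rightarrow> real" where
  "row_loss i v = \<alpha> / 2 * (1 - v i + (\<Sum>k\<in>{..<M} - {i}. v k))"

lemma soft_indicator_bounds: "0 \<le> soft_indicator k u \<and> soft_indicator k u \<le> 1"
  using pseudometric \<alpha>_pos by (auto simp: soft_indicator_def pseudometric_on_def)

lemma soft_indicator_pos_iff: "0 < soft_indicator k u \<longleftrightarrow> l u (th k) < \<alpha> / 2"
  using \<alpha>_pos by (auto simp: soft_indicator_def less_max_iff_disj field_simps)

lemma soft_indicator_complement: "\<alpha> / 2 * (1 - soft_indicator k u) \<le> l u (th k)"
  using \<alpha>_pos soft_indicator_pos_iff[of k u] by (cases "0 < soft_indicator k u") (auto simp: soft_indicator_def)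

lemma soft_indicator_far:
  assumes "i < M" "k < M" "i \<noteq> k" "u \<in> \<Theta>" "0 < soft_indicator k u"
  shows "\<alpha> / 2 * (1 + soft_indicator k u) \<le> l u (th i)"
proof -
  have "\<alpha> \<le> l (th i) (th k)" using separated assms by simp
  also have "\<dots> \<le> l u (th i) + l u (th k)"
    using pseudometric th_in assms unfolding pseudometric_on_def by (metis (no_types, lifting))
  finally have "\<alpha> - l u (th k) \<le> l u (th i)" by simp
  moreover have "soft_indicator k u = 1 - 2 * l u (th k) / \<alpha>"
    using assms(5) by (auto simp: soft_indicator_def max_def)
  then have "\<alpha> / 2 * (1 + soft_indicator k u) = \<alpha> - l u (th k)"
    using \<alpha>_pos by (simp add: field_simps)
  ultimately show ?thesis by linarith
qed

lemma soft_indicator_disjoint: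
  assumes "k < M" "k' < M" "k \<noteq> k'" "u \<in> \<Theta>" "0 < soft_indicator k u"
  shows "soft_indicator k' u = 0"
proof -
  have "\<alpha> / 2 * (1 + soft_indicator k u) \<le> l u (th k')"
    using soft_indicator_far assms by simp
  moreover have "0 < \<alpha> / 2 * soft_indicator k u" using assms(5) \<alpha>_pos by simp
  ultimately have "\<not> 0 < soft_indicator k' u" by (simp add: soft_indicator_pos_iff algebra_simps)
  then show ?thesis using soft_indicator_bounds[of k' u] by simp
qed

lemma sum_soft_indicator:
  assumes "A \<subseteq> {..<M}" "u \<in> \<Theta>" "k0 < M" "0 < soft_indicator k0 u"
  shows "(\<Sum>k\<in>A. soft_indicator k u) = (if k0 \<in> A then soft_indicator k0 u else 0)"
proof -
  have "(\<Sum>k\<in>A. soft_indicator k u) = (\<Sum>k\<in>A. if k = k0 then soft_indicator k0 u else 0)"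
    using soft_indicator_disjoint[OF assms(3) _ _ assms(2,4)] assms(1) by (intro sum.cong) auto
  also have "\<dots> = (if k0 \<in> A then soft_indicator k0 u else 0)"
    using finite_subset[OF assms(1)] by simp
  finally show ?thesis .
qed

lemma soft_indicators_vanish:
  assumes "\<not> (\<exists>k\<in>A. 0 < soft_indicator k u)"
  shows "(\<Sum>k\<in>A. soft_indicator k u) = 0"
  using assms soft_indicator_bounds by (intro sum.neutral) (metis order_less_le)

lemma sum_soft_indicator_le_1:
  assumes "u \<in> \<Theta>"
  shows "(\<Sum>k<M. soft_indicator k u) \<le> 1"
proof (cases "\<exists>k0<M. 0 < soft_indicator k0 u")
  case True
  then obtain k0 where "k0 < M" "0 < soft_indicator k0 u" by blast
  then show ?thesis
    using sum_soft_indicator[of "{..<M}"] assms soft_indicator_bounds[of k0 u] by simp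
qed (use soft_indicators_vanish[of "{..<M}" u] in auto)

lemma row_loss_soft_indicator_le:
  assumes "u \<in> \<Theta>" "i < M"
  shows "row_loss i (\<lambda>k. soft_indicator k u) \<le> l u (th i)"
proof (cases "\<exists>k0\<in>{..<M} - {i}. 0 < soft_indicator k0 u")
  case True
  then obtain k0 where k0: "k0 < M" "k0 \<noteq> i" "0 < soft_indicator k0 u" by blast
  then have "(\<Sum>k\<in>{..<M} - {i}. soft_indicator k u) = soft_indicator k0 u"
    using sum_soft_indicator[of "{..<M} - {i}"] assms by auto
  moreover have "soft_indicator i u = 0"
    using soft_indicator_disjoint[OF k0(1) assms(2) k0(2) assms(1) k0(3)] .
  ultimately show ?thesis
    using soft_indicator_far[OF assms(2) k0(1) k0(2)[symmetric] assms(1) k0(3)] by (simp add: row_loss_def)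
next
  case False
  then show ?thesis
    using soft_indicators_vanish[OF False] soft_indicator_complement by (simp add: row_loss_def)
qed

lemma row_loss_nonneg:
  assumes "v i \<le> 1" "\<And>k. k < M \<Longrightarrow> 0 \<le> v k"
  shows "0 \<le> row_loss i v"
proof -
  have "0 \<le> (\<Sum>k\<in>{..<M} - {i}. v k)" using assms(2) by (intro sum_nonneg) auto
  then show ?thesis using assms(1) \<alpha>_pos by (simp add: row_loss_def)
qed

lemma integrable_row_loss:
  assumes "prob_space N" "i < M" "\<And>k. k < M \<Longrightarrow> integrable N (\<phi> k)"
  shows "integrable N (\<lambda>x. row_loss i (\<lambda>k. \<phi> k x))"
proof -
  interpret prob_space N by fact
  show ?thesis
    using assms(2,3) unfolding row_loss_def
    by (intro integrable_mult_right Bochner_Integration.integrable_add Bochner_Integration.integrable_diff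
        integrable_const Bochner_Integration.integrable_sum) auto
qed


lemma integral_row_loss:
  assumes "prob_space N" "i < M" "\<And>k. k < M \<Longrightarrow> integrable N (\<phi> k)"
  shows "(\<integral>x. row_loss i (\<lambda>k. \<phi> k x) \<partial>N) = row_loss i (\<lambda>k. \<integral>x. \<phi> k x \<partial>N)"
proof -
  interpret prob_space N by fact
  let ?S = "{..<M} - {i}"
  have int_i: "integrable N (\<phi> i)" and int_sum: "integrable N (\<lambda>x. \<Sum>k\<in>?S. \<phi> k x)"
    using assms(2,3) by auto
  have "(\<integral>x. 1 - \<phi> i x + (\<Sum>k\<in>?S. \<phi> k x) \<partial>N) = (\<integral>x. 1 - \<phi> i x \<partial>N) + (\<integral>x. (\<Sum>k\<in>?S. \<phi> k x) \<partial>N)"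
    using int_i int_sum by (intro Bochner_Integration.integral_add) auto
  also have "\<dots> = 1 - (\<integral>x. \<phi> i x \<partial>N) + (\<Sum>k\<in>?S. \<integral>x. \<phi> k x \<partial>N)"
    using int_i assms(3) by (simp add: prob_space Bochner_Integration.integral_sum)
  finally show ?thesis by (simp add: row_loss_def)
qed

end

section \<open>The confusion matrix of an estimator\<close>

locale packing_estimator = separated_points \<Theta> l \<alpha> M th
  for \<Theta> :: "'t::topological_space set" and l \<alpha> M th +
  fixes X :: "'x measure" and s :: nat and f :: "(nat \<Rightarrow> 'x) \<Rightarrow> 'y" and Y :: "'y measure"
    and P :: "nat \<Rightarrow> (nat \<Rightarrow> 'x) measure" and K :: "'y \<Rightarrow> 't measure"
  assumes l_measurable: "\<And>t. t \<in> \<Theta> \<Longrightarrow> (\<lambda>u. l u t) \<in> borel_measurable (restrict_space borel \<Theta>)"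
    and f_measurable: "f \<in> measurable (sample_space s X) Y"
    and K_measurable: "K \<in> measurable Y (prob_algebra (restrict_space borel \<Theta>))"
    and P_prob: "\<And>i. i < M \<Longrightarrow> prob_space (P i)"
    and P_sets: "\<And>i. i < M \<Longrightarrow> sets (P i) = sets (sample_space s X)"
begin

definition hit :: "nat \<Rightarrow> 'y \<Rightarrow> real" where
  "hit k y = (\<integral>u. soft_indicator k u \<partial>K y)"

definition confusion :: "nat \<Rightarrow> nat \<Rightarrow> real" where
  "confusion i k = (\<integral>x. hit k (f x) \<partial>P i)"

lemma K_prob: "y \<in> space Y \<Longrightarrow> prob_space (K y)"
  and sets_K: "y \<in> space Y \<Longrightarrow> sets (K y) = sets (restrict_space borel \<Theta>)"
  using measurable_space[OF K_measurable, of y] by (simp_all add: space_prob_algebra)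

lemma space_K: "y \<in> space Y \<Longrightarrow> space (K y) = \<Theta>"
  using sets_eq_imp_space_eq[OF sets_K] by (simp add: space_restrict_space)

lemma f_space: "x \<in> space (sample_space s X) \<Longrightarrow> f x \<in> space Y"
  using f_measurable by (rule measurable_space)

lemma space_P: "i < M \<Longrightarrow> space (P i) = space (sample_space s X)"
  using P_sets by (rule sets_eq_imp_space_eq)

lemma soft_indicator_measurable: "k < M \<Longrightarrow> soft_indicator k \<in> borel_measurable (restrict_space borel \<Theta>)"
  using l_measurable[OF th_in] unfolding soft_indicator_def[abs_def] by measurable

lemma integrable_soft_indicator:
  assumes "k < M" "y \<in> space Y"
  shows "integrable (K y) (soft_indicator k)"
proof -
  interpret prob_space "K y" using K_prob assms(2) .
  show ?thesis
    using soft_indicator_measurable[OF assms(1)] soft_indicator_bounds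
    by (intro integrable_const_bound[where B=1]) (auto simp: measurable_cong_sets[OF sets_K[OF assms(2)] refl])
qed

lemma hit_bounds:
  assumes "k < M" "y \<in> space Y"
  shows "0 \<le> hit k y \<and> hit k y \<le> 1"
proof -
  interpret prob_space "K y" using K_prob assms(2) .
  have "hit k y \<le> (\<integral>u. 1 \<partial>K y)" unfolding hit_def
    using integrable_soft_indicator[OF assms] soft_indicator_bounds by (intro integral_mono) auto
  then show ?thesis using soft_indicator_bounds by (simp add: hit_def prob_space)
qed

lemma hit_measurable: "k < M \<Longrightarrow> hit k \<in> borel_measurable Y"
  using measurable_compose[OF measurable_prob_algebraD[OF K_measurable]
      integral_measurable_subprob_algebra[OF soft_indicator_measurable]]
  by (simp add: hit_def[abs_def])

lemma sum_hit_le_1: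
  assumes "y \<in> space Y"
  shows "(\<Sum>k<M. hit k y) \<le> 1"
proof -
  interpret prob_space "K y" using K_prob assms .
  have "(\<Sum>k<M. hit k y) = (\<integral>u. (\<Sum>k<M. soft_indicator k u) \<partial>K y)"
    unfolding hit_def using integrable_soft_indicator assms by (simp add: Bochner_Integration.integral_sum)
  also have "\<dots> \<le> (\<integral>u. 1 \<partial>K y)"
    using integrable_soft_indicator assms sum_soft_indicator_le_1 space_K by (intro integral_mono) auto
  finally show ?thesis by (simp add: prob_space)
qed

lemma hit_comp_f_measurable: "k < M \<Longrightarrow> i < M \<Longrightarrow> (\<lambda>x. hit k (f x)) \<in> borel_measurable (P i)"
  using measurable_compose[OF f_measurable hit_measurable] by (simp add: measurable_cong_sets[OF P_sets refl])

lemma integrable_hit: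
  assumes "k < M" "i < M"
  shows "integrable (P i) (\<lambda>x. hit k (f x))"
proof -
  interpret prob_space "P i" using P_prob assms(2) .
  show ?thesis
    using hit_comp_f_measurable[OF assms] hit_bounds[OF assms(1) f_space] space_P[OF assms(2)]
    by (intro integrable_const_bound[where B=1]) auto
qed

lemma confusion_bounds:
  assumes "i < M" "k < M"
  shows "0 \<le> confusion i k \<and> confusion i k \<le> 1"
proof -
  interpret prob_space "P i" using P_prob assms(1) .
  have "confusion i k \<le> (\<integral>x. 1 \<partial>P i)" unfolding confusion_def
    using integrable_hit assms hit_bounds f_space space_P by (intro integral_mono) auto
  moreover have "0 \<le> confusion i k" unfolding confusion_def
    using assms hit_bounds f_space space_P by (intro Bochner_Integration.integral_nonneg) auto
  ultimately show ?thesis by (simp add: prob_space)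
qed

lemma sum_confusion_le_1:
  assumes "i < M"
  shows "(\<Sum>k<M. confusion i k) \<le> 1"
proof -
  interpret prob_space "P i" using P_prob assms .
  have "(\<Sum>k<M. confusion i k) = (\<integral>x. (\<Sum>k<M. hit k (f x)) \<partial>P i)"
    unfolding confusion_def using integrable_hit assms by (simp add: Bochner_Integration.integral_sum)
  also have "\<dots> \<le> (\<integral>x. 1 \<partial>P i)"
    using integrable_hit assms sum_hit_le_1 f_space space_P by (intro integral_mono) auto
  finally show ?thesis by (simp add: prob_space)
qed

lemma row_loss_hit_le_expected_loss:
  assumes "y \<in> space Y" "i < M"
  shows "ennreal (row_loss i (\<lambda>k. hit k y)) \<le> (\<integral>\<^sup>+u. l u (th i) \<partial>K y)"
proof -
  have "row_loss i (\<lambda>k. hit k y) = (\<integral>u. row_loss i (\<lambda>k. soft_indicator k u) \<partial>K y)"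
    unfolding hit_def using K_prob assms integrable_soft_indicator
    by (intro integral_row_loss[symmetric]) auto
  also have "ennreal \<dots> \<le> (\<integral>\<^sup>+u. l u (th i) \<partial>K y)"
  proof (rule ennreal_integral_le_nn_integral)
    show "integrable (K y) (\<lambda>u. row_loss i (\<lambda>k. soft_indicator k u))"
      using assms integrable_soft_indicator by (intro integrable_row_loss K_prob) auto
    show "0 \<le> row_loss i (\<lambda>k. soft_indicator k u)" for u
      using soft_indicator_bounds by (intro row_loss_nonneg) auto
    show "ennreal (row_loss i (\<lambda>k. soft_indicator k u)) \<le> ennreal (l u (th i))" if "u \<in> space (K y)" for u
      using row_loss_soft_indicator_le[OF _ assms(2)] that space_K[OF assms(1)] by (intro ennreal_leI) auto
  qed
  finally show ?thesis .
qed

lemma risk_ge_row_loss: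
  assumes "i < M"
  shows "ennreal (row_loss i (confusion i)) \<le> (\<integral>\<^sup>+x. (\<integral>\<^sup>+u. l u (th i) \<partial>K (f x)) \<partial>P i)"
proof -
  have "row_loss i (confusion i) = (\<integral>x. row_loss i (\<lambda>k. hit k (f x)) \<partial>P i)"
    unfolding confusion_def using P_prob assms integrable_hit
    by (intro integral_row_loss[symmetric]) auto
  also have "ennreal \<dots> \<le> (\<integral>\<^sup>+x. (\<integral>\<^sup>+u. l u (th i) \<partial>K (f x)) \<partial>P i)"
  proof (rule ennreal_integral_le_nn_integral)
    show "integrable (P i) (\<lambda>x. row_loss i (\<lambda>k. hit k (f x)))"
      using assms integrable_hit by (intro integrable_row_loss P_prob) auto
    fix x assume "x \<in> space (P i)"
    then have "f x \<in> space Y" using f_space space_P[OF assms] by simp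
    then show "0 \<le> row_loss i (\<lambda>k. hit k (f x))"
      using hit_bounds assms by (intro row_loss_nonneg) auto
    show "ennreal (row_loss i (\<lambda>k. hit k (f x))) \<le> (\<integral>\<^sup>+u. l u (th i) \<partial>K (f x))"
      using row_loss_hit_le_expected_loss[OF \<open>f x \<in> space Y\<close> assms] .
  qed
  finally show ?thesis .
qed

lemma confusion_kl_bound:
  assumes "i < M" "j < M" "kl_div (P i) (P j) \<le> ereal \<beta>" "0 \<le> A"
  shows "A * confusion i i + 1 / 2 - ln 2 - (exp A - 1) * confusion j i / 2 \<le> \<beta>"
  unfolding confusion_def
  using P_prob P_sets assms hit_comp_f_measurable hit_bounds f_space space_P
  by (intro kl_div_test_bound) auto

lemma hit_dp_bound:
  assumes dp: "dp_kernel s X \<epsilon> (K \<circ> f)" and "k < M"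
    and x: "x \<in> space (sample_space s X)" and z: "z \<in> space (sample_space s X)"
  shows "hit k (f x) \<le> exp (max \<epsilon> 0 * real (hamming s x z)) * hit k (f z)"
proof -
  let ?d = "real (hamming s x z)"
  have nn_hit: "(\<integral>\<^sup>+u. soft_indicator k u \<partial>K y) = ennreal (hit k y)" if "y \<in> space Y" for y
    unfolding hit_def using integrable_soft_indicator[OF \<open>k < M\<close> that] soft_indicator_bounds
    by (intro nn_integral_eq_integral) auto
  have "(\<integral>\<^sup>+u. soft_indicator k u \<partial>(K \<circ> f) x) \<le> ennreal (exp (\<epsilon> * ?d)) * (\<integral>\<^sup>+u. soft_indicator k u \<partial>(K \<circ> f) z)"
    by (rule dp_kernel_nn_integral_le[OF dp _ _ x z])
       (use sets_K f_space soft_indicator_measurable[OF \<open>k < M\<close>] in auto)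
  then have "hit k (f x) \<le> exp (\<epsilon> * ?d) * hit k (f z)"
    using nn_hit f_space x z hit_bounds[OF \<open>k < M\<close>] by (simp add: ennreal_mult[symmetric])
  also have "\<dots> \<le> exp (max \<epsilon> 0 * ?d) * hit k (f z)"
    using hit_bounds[OF \<open>k < M\<close> f_space[OF z]] by (intro mult_right_mono) (auto intro: mult_right_mono)
  finally show ?thesis .
qed

lemma confusion_dp_bound:
  assumes dp: "dp_kernel s X \<epsilon> (K \<circ> f)" and "i < M" "j < M"
    and coupling: "f_coupling_bound s X f Y (P i) (P j) D"
  shows "exp (- t) * ((1 + t) * confusion i i - max \<epsilon> 0 * max D 0) \<le> confusion j i"
  unfolding confusion_def
  using hit_bounds[OF \<open>i < M\<close>] hit_dp_bound[OF dp \<open>i < M\<close>]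
  by (intro f_coupling_transfer[OF coupling f_measurable P_sets P_sets hit_measurable]) (auto simp: assms)

lemma fano_risk_bound:
  assumes "2 \<le> M"
    and kl: "\<And>i j. i < M \<Longrightarrow> j < M \<Longrightarrow> i \<noteq> j \<Longrightarrow> kl_div (P i) (P j) \<le> ereal \<beta>"
  shows "\<exists>i<M. ennreal (\<alpha> / 2 * (1 - (\<beta> + ln 2) / ln (real M)))
                \<le> (\<integral>\<^sup>+x. (\<integral>\<^sup>+u. l u (th i) \<partial>K (f x)) \<partial>P i)"
proof -
  have "\<exists>i<M. confusion i i \<le> (\<beta> + ln 2) / ln (real M)"
  proof (rule fano_diagonal_bound[OF \<open>2 \<le> M\<close>, of confusion])
    show "0 \<le> confusion 0 k" if "k < M" for k using confusion_bounds that \<open>2 \<le> M\<close> by simp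
    show "(\<Sum>k<M. confusion 0 k) \<le> 1" using sum_confusion_le_1 \<open>2 \<le> M\<close> by simp
    show "ln (real M) * confusion i i + 1 / 2 - ln 2 - (real M - 1) * confusion 0 i / 2 \<le> \<beta>"
      if "0 < i" "i < M" for i
      using confusion_kl_bound[OF that(2) _ kl, of 0 "ln (real M)"] that \<open>2 \<le> M\<close> by simp
  qed
  then obtain i where "i < M" and diag: "confusion i i \<le> (\<beta> + ln 2) / ln (real M)"
    by blast
  have "0 \<le> (\<Sum>k\<in>{..<M} - {i}. confusion i k)"
    using confusion_bounds \<open>i < M\<close> by (intro sum_nonneg) auto
  then have "\<alpha> / 2 * (1 - (\<beta> + ln 2) / ln (real M)) \<le> row_loss i (confusion i)"
    using diag \<alpha>_pos unfolding row_loss_def by (intro mult_left_mono) auto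
  then have "ennreal (\<alpha> / 2 * (1 - (\<beta> + ln 2) / ln (real M))) \<le> ennreal (row_loss i (confusion i))"
    by (rule ennreal_leI)
  also note risk_ge_row_loss[OF \<open>i < M\<close>]
  finally show ?thesis using \<open>i < M\<close> by blast
qed

lemma private_risk_bound:
  assumes "2 \<le> M" and dp: "dp_kernel s X \<epsilon> (K \<circ> f)"
    and coupling: "\<And>i j. i < M \<Longrightarrow> j < M \<Longrightarrow> i \<noteq> j \<Longrightarrow> f_coupling_bound s X f Y (P i) (P j) D"
  shows "\<exists>i<M. ennreal (0.4 * \<alpha> * min 1 (real M / exp (10 * \<epsilon> * D)))
                \<le> (\<integral>\<^sup>+x. (\<integral>\<^sup>+u. l u (th i) \<partial>K (f x)) \<partial>P i)"
proof -
  define c where "c = max \<epsilon> 0 * max D 0"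
  define \<rho> where "\<rho> = 0.8 * min 1 (real M / exp (10 * c))"
  have "0 \<le> c" by (simp add: c_def)
  obtain i where "i < M" and row: "\<rho> \<le> 1 - confusion i i + (\<Sum>k\<in>{..<M} - {i}. confusion i k)"
  proof (rule exE[OF private_fano_row_bound[of M c \<rho> confusion]])
    show "exp (- 5 * c) * ((1 + 5 * c) * confusion i i - c) \<le> confusion j i"
      if "i < M" "j < M" "i \<noteq> j" for i j
      using confusion_dp_bound[OF dp that(1,2) coupling[OF that], of "5 * c"] by (simp add: c_def)
    show "\<rho> \<le> (real M - 1) * exp (- 5 * c) * (1 + 4 * c)"
      unfolding \<rho>_def by (rule private_fano_constant[OF \<open>2 \<le> M\<close> \<open>0 \<le> c\<close>])
  qed (use \<open>2 \<le> M\<close> \<open>0 \<le> c\<close> confusion_bounds in \<open>auto simp: \<rho>_def\<close>)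
  have "min 1 (real M / exp (10 * \<epsilon> * D)) \<le> min 1 (real M / exp (10 * c))"
  proof (cases "0 \<le> \<epsilon> \<and> 0 \<le> D")
    case False
    then have "c = 0" by (auto simp: c_def)
    then show ?thesis using \<open>2 \<le> M\<close> by simp
  qed (simp add: c_def mult.assoc)
  then have "0.4 * \<alpha> * min 1 (real M / exp (10 * \<epsilon> * D)) \<le> \<alpha> / 2 * \<rho>"
    using \<alpha>_pos unfolding \<rho>_def by simp
  also have "\<dots> \<le> row_loss i (confusion i)"
    using row \<alpha>_pos unfolding row_loss_def by (intro mult_left_mono) auto
  finally have "ennreal (0.4 * \<alpha> * min 1 (real M / exp (10 * \<epsilon> * D))) \<le> ennreal (row_loss i (confusion i))"
    by (rule ennreal_leI)
  also note risk_ge_row_loss[OF \<open>i < M\<close>]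
  finally show ?thesis using \<open>i < M\<close> by blast
qed

lemma minimax_lower_bound:
  assumes "2 \<le> M"
    and kl: "\<And>i j. i < M \<Longrightarrow> j < M \<Longrightarrow> i \<noteq> j \<Longrightarrow> kl_div (P i) (P j) \<le> ereal \<beta>"
    and dp: "dp_kernel s X \<epsilon> (K \<circ> f)"
    and coupling: "\<And>i j. i < M \<Longrightarrow> j < M \<Longrightarrow> i \<noteq> j \<Longrightarrow> f_coupling_bound s X f Y (P i) (P j) D"
  shows "ennreal (max (\<alpha> / 2 * (1 - (\<beta> + ln 2) / ln (real M)))
                      (0.4 * \<alpha> * min 1 (real M / exp (10 * \<epsilon> * D))))
         \<le> (SUP i\<in>{..<M}. \<integral>\<^sup>+x. (\<integral>\<^sup>+u. l u (th i) \<partial>K (f x)) \<partial>P i)"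
proof -
  obtain i where "i < M" and fano: "ennreal (\<alpha> / 2 * (1 - (\<beta> + ln 2) / ln (real M)))
      \<le> (\<integral>\<^sup>+x. (\<integral>\<^sup>+u. l u (th i) \<partial>K (f x)) \<partial>P i)"
    using fano_risk_bound[OF \<open>2 \<le> M\<close> kl] by blast
  obtain j where "j < M" and dp_bound: "ennreal (0.4 * \<alpha> * min 1 (real M / exp (10 * \<epsilon> * D)))
      \<le> (\<integral>\<^sup>+x. (\<integral>\<^sup>+u. l u (th j) \<partial>K (f x)) \<partial>P j)"
    using private_risk_bound[OF \<open>2 \<le> M\<close> dp coupling] by blast
  have upper: "(\<integral>\<^sup>+x. (\<integral>\<^sup>+u. l u (th k) \<partial>K (f x)) \<partial>P k)
      \<le> (SUP i\<in>{..<M}. \<integral>\<^sup>+x. (\<integral>\<^sup>+u. l u (th i) \<partial>K (f x)) \<partial>P i)" if "k < M" for k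
    using that by (intro SUP_upper) simp
  show ?thesis
    using order_trans[OF fano upper[OF \<open>i < M\<close>]] order_trans[OF dp_bound upper[OF \<open>j < M\<close>]]
    by (simp add: max_def)
qed

end

theorem theorem11:
  fixes X :: "'x measure" and \<P> :: "'x measure set"
    and \<theta> :: "'x measure \<Rightarrow> real ^ 'd" and \<Theta> :: "(real ^ 'd) set"
    and l :: "real ^ 'd \<Rightarrow> real ^ 'd \<Rightarrow> real"
    and s :: nat and f :: "(nat \<Rightarrow> 'x) \<Rightarrow> 'y" and Y :: "'y measure"
    and \<epsilon> \<alpha> \<beta> D :: real and M :: nat and p :: "nat \<Rightarrow> 'x measure"
  assumes P_prob: "\<And>q. q \<in> \<P> \<Longrightarrow> prob_space q \<and> sets q = sets X"
    and \<theta>_inj: "inj_on \<theta> \<P>" and \<theta>_range: "\<theta> ` \<P> \<subseteq> \<Theta>"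
    and l_pm: "pseudometric_on \<Theta> l"
    and l_meas: "\<And>t. t \<in> \<Theta> \<Longrightarrow> (\<lambda>u. l u t) \<in> borel_measurable (restrict_space borel \<Theta>)"
    and f_meas: "f \<in> measurable (sample_space s X) Y"
    and M_ge: "M \<ge> 2"
    and V_sub: "\<And>i. i < M \<Longrightarrow> p i \<in> \<P>"
    and V_inj: "inj_on p {..<M}"
    and \<alpha>_nonneg: "\<alpha> \<ge> 0"
    and sep: "\<And>i j. i < M \<Longrightarrow> j < M \<Longrightarrow> i \<noteq> j \<Longrightarrow> l (\<theta> (p i)) (\<theta> (p j)) \<ge> \<alpha>"
    and kl: "\<And>i j. i < M \<Longrightarrow> j < M \<Longrightarrow> i \<noteq> j \<Longrightarrow>
               kl_div (prod_pow (p i) s) (prod_pow (p j) s) \<le> ereal \<beta>"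
    and coup: "\<And>i j. i < M \<Longrightarrow> j < M \<Longrightarrow> i \<noteq> j \<Longrightarrow>
               f_coupling_bound s X f Y (prod_pow (p i) s) (prod_pow (p j) s) D"
  shows "(INF K\<in>f_restricted_dp_estimators s X f Y \<Theta> \<epsilon>. SUP q\<in>\<P>. risk s f K l (\<theta> q) q)
         \<ge> ennreal (max (\<alpha> / 2 * (1 - (\<beta> + ln 2) / ln (real M)))
                         (0.4 * \<alpha> * min 1 (real M / exp (10 * \<epsilon> * D))))"
proof (cases "\<alpha> = 0")
  case False
  show ?thesis
  proof (rule INF_greatest)
    fix K assume "K \<in> f_restricted_dp_estimators s X f Y \<Theta> \<epsilon>"
    then have K: "K \<in> measurable Y (prob_algebra (restrict_space borel \<Theta>))" "dp_kernel s X \<epsilon> (K \<circ> f)"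
      by (auto simp: f_restricted_dp_estimators_def)
    interpret packing_estimator \<Theta> l \<alpha> M "\<lambda>i. \<theta> (p i)" X s f Y "\<lambda>i. prod_pow (p i) s" K
      using l_pm False \<alpha>_nonneg \<theta>_range V_sub sep l_meas f_meas K P_prob
      by (intro packing_estimator.intro separated_points.intro packing_estimator_axioms.intro)
         (auto simp: prob_space_prod_pow sets_prod_pow)
    have "(SUP i\<in>{..<M}. risk s f K l (\<theta> (p i)) (p i)) \<le> (SUP q\<in>\<P>. risk s f K l (\<theta> q) q)"
      using V_sub by (intro SUP_mono) blast
    with minimax_lower_bound[OF M_ge kl K(2) coup]
    show "ennreal (max (\<alpha> / 2 * (1 - (\<beta> + ln 2) / ln (real M)))
                        (0.4 * \<alpha> * min 1 (real M / exp (10 * \<epsilon> * D))))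
          \<le> (SUP q\<in>\<P>. risk s f K l (\<theta> q) q)"
      by (simp add: risk_def)
  qed
qed simp

end
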